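(* Let $G_m$ be a parametric regulatory network, $R$ a well-formed set of influence constraints, and $T\subseteq\Delta(G_m)$ such that $p_R(T)\neq\emptyset$; let $L,U$ be the componentwise minimum and maximum of $p_R(T)$. For $v\in V$, $\omega\in\Omega_v$ and $\mathcal O\subseteq\Omega_v\times D_v$ define $l_{v,\omega}(\mathcal O)=\max(\{k\mid(\omega',k)\in\mathcal O,\ \omega'\prec_v\omega\}\cup\{L_{v,\omega}\})$ and $u_{v,\omega}(\mathcal O)=\min(\{k\mid(\omega',k)\in\mathcal O,\ \omega'\succ_v\omega\}\cup\{U_{v,\omega}\})$. Then for every $v\in V$, every pair of distinct $\omega,\omega'\in\Omega_v$, every $y\in\{L_{v,\omega},\dots,U_{v,\omega}\}$ and every $z\in\{l_{v,\omega'}(\{(\omega,y)\}),\dots,u_{v,\omega'}(\{(\omega,y)\})\}$: if there exists $\omega''\in\Omega_v\setminus\{\omega,\omega'\}$ with $l_{v,\omega''}(\{(\omega,y),(\omega',z)\})<u_{v,\omega''}(\{(\omega,y),(\omega',z)\})$, then there exists $P\in p_R(T)$ with $P_{v,\omega}=y$ and $P_{v,\omega'}=z$.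
   Context: An influence graph is $G=(V,I)$, $V=\{1,\dots,n\}$, $I\subseteq V\times V$; regulators $n^-(v)=\{u\mid(u,v)\in I\}$. $m\in\mathbb N^n$, $D_v=\{0,\dots,m_v\}$, PRN $G_m=(G,m)$. Regulator states $\Omega_v=\prod_{u\in n^-(v)}D_u$; $\omega[u\leftarrow k]$ replaces component $u$ of $\omega$ by $k$. Parametrisations: vectors $P\in\mathbb P(G_m)$ with coordinates $P_{v,\omega}\in D_v$ for $v\in V$, $\omega\in\Omega_v$, ordered componentwise. States $\prod_vD_v$; $\omega_v(x)$ projects a state $x$ onto the regulators of $v$. Transitions $\Delta(G_m)$: $x\xrightarrow{v,+}y$ ($y$ equals $x$ except $y_v=x_v+1\le m_v$) and $x\xrightarrow{v,-}y$ ($y_v=x_v-1\ge0$). $\mathcal P_{x\xrightarrow{v,+}y}=\{P\mid P_{v,\omega_v(x)}\ge x_v+1\}$, $\mathcal P_{x\xrightarrow{v,-}y}=\{P\mid P_{v,\omega_v(x)}\le x_v-1\}$; $p(\emptyset)=\mathbb P(G_m)$, $p(T)=\bigcap_{t\in T}\mathcal P_t$. $R\subseteq V\times V\times\{+1,-1,\mathrm o\}$ is well-formed if $u\in n^-(v)$ for all $(u,v,c)\in R$ and never both $(u,v,+1),(u,v,-1)\in R$. $\mathcal P_{(u,v,+1)}=\{P\mid\forall\omega\in\Omega_v\forall x_u\in\{1..m_u\}:P_{v,\omega[u\leftarrow x_u]}\ge P_{v,\omega[u\leftarrow x_u-1]}\}$, $\mathcal P_{(u,v,-1)}$ likewise with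 $\le$, $\mathcal P_{(u,v,\mathrm o)}=\{P\mid\exists\omega\in\Omega_v\exists x_u\in\{1..m_u\}:P_{v,\omega[u\leftarrow x_u]}\ne P_{v,\omega[u\leftarrow x_u-1]}\}$; $p_R(T)=p(T)\cap\bigcap_{r\in R}\mathcal P_r$. Order $\preceq_v$: $\omega\preceq_v\omega'$ iff for all $u\in n^-(v)$, $\omega_u\le\omega'_u$ if $(u,v,+1)\in R$, $\omega_u\ge\omega'_u$ if $(u,v,-1)\in R$, $\omega_u=\omega'_u$ otherwise; $\prec_v,\succ_v$ are the strict versions and their converses. *)

theory Defs
  imports Main
begin

text \<open>Vertices are V = {1..n}; the influence graph is I (a set of pairs), the
maximal activity levels are given by m. Parametrisations are
functions P v \<omega>, required to be zero outside the index set
{(v,\<omega>). v \<in> V, \<omega> \<in> \<Omega>_v} (extensionality), so that p(T) is a finite set.\<close>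

datatype sgn = Act | Inh | Obs   \<comment> \<open>+1, -1, o\<close>

definition Vset :: "nat \<Rightarrow> nat set" where
  "Vset n = {1..n}"

definition reg :: "(nat \<times> nat) set \<Rightarrow> nat \<Rightarrow> nat set" where
  "reg I v = {u. (u, v) \<in> I}"

definition Omega :: "(nat \<times> nat) set \<Rightarrow> (nat \<Rightarrow> nat) \<Rightarrow> nat \<Rightarrow> (nat \<Rightarrow> nat) set" where
  "Omega I m v = {\<omega>. (\<forall>u \<in> reg I v. \<omega> u \<le> m u) \<and> (\<forall>u. u \<notin> reg I v \<longrightarrow> \<omega> u = 0)}"

definition Params :: "nat \<Rightarrow> (nat \<times> nat) set \<Rightarrow> (nat \<Rightarrow> nat)
    \<Rightarrow> (nat \<Rightarrow> (nat \<Rightarrow> nat) \<Rightarrow> nat) set" where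
  "Params n I m = {P. \<forall>v \<omega>. (v \<in> Vset n \<and> \<omega> \<in> Omega I m v \<longrightarrow> P v \<omega> \<le> m v)
                          \<and> (\<not> (v \<in> Vset n \<and> \<omega> \<in> Omega I m v) \<longrightarrow> P v \<omega> = 0)}"

definition States :: "nat \<Rightarrow> (nat \<Rightarrow> nat) \<Rightarrow> (nat \<Rightarrow> nat) set" where
  "States n m = {x. \<forall>v. (v \<in> Vset n \<longrightarrow> x v \<le> m v) \<and> (v \<notin> Vset n \<longrightarrow> x v = 0)}"

definition omega_of :: "(nat \<times> nat) set \<Rightarrow> nat \<Rightarrow> (nat \<Rightarrow> nat) \<Rightarrow> (nat \<Rightarrow> nat)" where
  "omega_of I v x = (\<lambda>u. if u \<in> reg I v then x u else 0)"

text \<open>A transition (x, v, b, y): b = True means x -(v,+)-> y, b = False means x -(v,-)-> y.\<close>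
type_synonym trans = "(nat \<Rightarrow> nat) \<times> nat \<times> bool \<times> (nat \<Rightarrow> nat)"

definition Delta :: "nat \<Rightarrow> (nat \<Rightarrow> nat) \<Rightarrow> trans set" where
  "Delta n m = {(x, v, b, y). x \<in> States n m \<and> v \<in> Vset n \<and>
      (if b then x v + 1 \<le> m v \<and> y = x(v := x v + 1)
            else 1 \<le> x v \<and> y = x(v := x v - 1))}"

definition Ptrans :: "nat \<Rightarrow> (nat \<times> nat) set \<Rightarrow> (nat \<Rightarrow> nat) \<Rightarrow> trans
    \<Rightarrow> (nat \<Rightarrow> (nat \<Rightarrow> nat) \<Rightarrow> nat) set" where
  "Ptrans n I m t = (case t of (x, v, b, y) \<Rightarrow>
     {P \<in> Params n I m. if b then P v (omega_of I v x) \<ge> x v + 1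
                         else P v (omega_of I v x) + 1 \<le> x v})"

definition p :: "nat \<Rightarrow> (nat \<times> nat) set \<Rightarrow> (nat \<Rightarrow> nat) \<Rightarrow> trans set
    \<Rightarrow> (nat \<Rightarrow> (nat \<Rightarrow> nat) \<Rightarrow> nat) set" where
  "p n I m T = {P \<in> Params n I m. \<forall>t \<in> T. P \<in> Ptrans n I m t}"

definition well_formed :: "(nat \<times> nat) set \<Rightarrow> (nat \<times> nat \<times> sgn) set \<Rightarrow> bool" where
  "well_formed I R \<longleftrightarrow> (\<forall>(u, v, c) \<in> R. u \<in> reg I v) \<and>
      (\<forall>u v. \<not> ((u, v, Act) \<in> R \<and> (u, v, Inh) \<in> R))"

definition Pconstr :: "nat \<Rightarrow> (nat \<times> nat) set \<Rightarrow> (nat \<Rightarrow> nat) \<Rightarrow> nat \<times> nat \<times> sgn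
    \<Rightarrow> (nat \<Rightarrow> (nat \<Rightarrow> nat) \<Rightarrow> nat) set" where
  "Pconstr n I m r = (case r of (u, v, c) \<Rightarrow>
     (case c of
        Act \<Rightarrow> {P \<in> Params n I m. \<forall>\<omega> \<in> Omega I m v. \<forall>k \<in> {1..m u}.
                   P v (\<omega>(u := k)) \<ge> P v (\<omega>(u := k - 1))}
      | Inh \<Rightarrow> {P \<in> Params n I m. \<forall>\<omega> \<in> Omega I m v. \<forall>k \<in> {1..m u}.
                   P v (\<omega>(u := k)) \<le> P v (\<omega>(u := k - 1))}
      | Obs \<Rightarrow> {P \<in> Params n I m. \<exists>\<omega> \<in> Omega I m v. \<exists>k \<in> {1..m u}.
                   P v (\<omega>(u := k)) \<noteq> P v (\<omega>(u := k - 1))}))"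

definition pR :: "nat \<Rightarrow> (nat \<times> nat) set \<Rightarrow> (nat \<Rightarrow> nat) \<Rightarrow> (nat \<times> nat \<times> sgn) set
    \<Rightarrow> trans set \<Rightarrow> (nat \<Rightarrow> (nat \<Rightarrow> nat) \<Rightarrow> nat) set" where
  "pR n I m R T = p n I m T \<inter> {P. \<forall>r \<in> R. P \<in> Pconstr n I m r}"

definition preceq :: "(nat \<times> nat) set \<Rightarrow> (nat \<times> nat \<times> sgn) set \<Rightarrow> nat
    \<Rightarrow> (nat \<Rightarrow> nat) \<Rightarrow> (nat \<Rightarrow> nat) \<Rightarrow> bool" where
  "preceq I R v \<omega> \<omega>' \<longleftrightarrow> (\<forall>u \<in> reg I v.
      (if (u, v, Act) \<in> R then \<omega> u \<le> \<omega>' u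
       else if (u, v, Inh) \<in> R then \<omega> u \<ge> \<omega>' u
       else \<omega> u = \<omega>' u))"

definition prec :: "(nat \<times> nat) set \<Rightarrow> (nat \<times> nat \<times> sgn) set \<Rightarrow> nat
    \<Rightarrow> (nat \<Rightarrow> nat) \<Rightarrow> (nat \<Rightarrow> nat) \<Rightarrow> bool" where
  "prec I R v \<omega> \<omega>' \<longleftrightarrow> preceq I R v \<omega> \<omega>' \<and> \<omega> \<noteq> \<omega>'"

definition Lb where
  "Lb n I m R T v \<omega> = Min {P v \<omega> | P. P \<in> pR n I m R T}"

definition Ub where
  "Ub n I m R T v \<omega> = Max {P v \<omega> | P. P \<in> pR n I m R T}"

definition lo :: "nat \<Rightarrow> (nat \<times> nat) set \<Rightarrow> (nat \<Rightarrow> nat) \<Rightarrow> (nat \<times> nat \<times> sgn) set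
    \<Rightarrow> trans set \<Rightarrow> nat \<Rightarrow> (nat \<Rightarrow> nat) \<Rightarrow> ((nat \<Rightarrow> nat) \<times> nat) set \<Rightarrow> nat" where
  "lo n I m R T v \<omega> Ob = Max ({k. \<exists>\<omega>'. (\<omega>', k) \<in> Ob \<and> prec I R v \<omega>' \<omega>} \<union> {Lb n I m R T v \<omega>})"

definition up :: "nat \<Rightarrow> (nat \<times> nat) set \<Rightarrow> (nat \<Rightarrow> nat) \<Rightarrow> (nat \<times> nat \<times> sgn) set
    \<Rightarrow> trans set \<Rightarrow> nat \<Rightarrow> (nat \<Rightarrow> nat) \<Rightarrow> ((nat \<Rightarrow> nat) \<times> nat) set \<Rightarrow> nat" where
  "up n I m R T v \<omega> Ob = Min ({k. \<exists>\<omega>'. (\<omega>', k) \<in> Ob \<and> prec I R v \<omega> \<omega>'} \<union> {Ub n I m R T v \<omega>})"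

end

theory Submission
  imports Defs
begin

text \<open>Every member of p_R(T) is \<preceq>_v-monotone in its v-component, because the activation and
  inhibition constraints give monotonicity along unit steps. Conversely, replacing the v-component
  of a member of p_R(T) by any \<preceq>_v-monotone function F with L \<le> F \<le> U that depends on every
  observable regulator of v gives again a member: the transition constraints are interval
  constraints, so they pass from the members attaining L and U to everything in between.

  The observations {(\<omega>, y), (\<omega>', z)} determine monotone lower and upper envelopes f \<le> g between L
  and U that both take the observed values at \<omega> and \<omega>', and by hypothesis f < g at some third
  point. If f ignores an observable regulator, raising f by one at a \<preceq>_v-maximal point of the gap
  keeps it monotone (above that point f = g) and makes it depend on every regulator, since a
  function that ignores one regulator cannot stay independent of any regulator after a change at
  a single point.\<close>

section \<open>The order \<preceq>_v and monotone functions on regulator states\<close>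

lemma Omega_le: "a \<in> Omega I m v \<Longrightarrow> a u \<le> m u"
  by (cases "u \<in> reg I v") (simp_all add: Omega_def)

lemma Omega_fun_upd: "a \<in> Omega I m v \<Longrightarrow> u \<in> reg I v \<Longrightarrow> k \<le> m u \<Longrightarrow> a(u := k) \<in> Omega I m v"
  by (simp add: Omega_def)

lemma Omega_eqI:
  assumes "a \<in> Omega I m v" "b \<in> Omega I m v" "\<And>u. u \<in> reg I v \<Longrightarrow> a u = b u"
  shows "a = b"
proof
  fix u show "a u = b u"
    using assms by (cases "u \<in> reg I v") (auto simp: Omega_def)
qed

lemma preceq_refl: "preceq I R v a a"
  by (simp add: preceq_def)

lemma preceq_trans:
  assumes "preceq I R v a b" "preceq I R v b c"
  shows "preceq I R v a c"
  unfolding preceq_def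
proof
  fix u assume "u \<in> reg I v"
  with assms have
    "if (u, v, Act) \<in> R then a u \<le> b u else if (u, v, Inh) \<in> R then b u \<le> a u else a u = b u"
    "if (u, v, Act) \<in> R then b u \<le> c u else if (u, v, Inh) \<in> R then c u \<le> b u else b u = c u"
    unfolding preceq_def by blast+
  then show "if (u, v, Act) \<in> R then a u \<le> c u else if (u, v, Inh) \<in> R then c u \<le> a u else a u = c u"
    by (cases "(u, v, Act) \<in> R"; cases "(u, v, Inh) \<in> R") auto
qed

lemma preceq_Act_step: "(u, v, Act) \<in> R \<Longrightarrow> preceq I R v (w(u := k - 1)) (w(u := k))"
  by (simp add: preceq_def)

lemma preceq_Inh_step:
  "(u, v, Inh) \<in> R \<Longrightarrow> (u, v, Act) \<notin> R \<Longrightarrow> preceq I R v (w(u := k)) (w(u := k - 1))"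
  by (simp add: preceq_def)

definition preceq_mono ::
    "(nat \<times> nat) set \<Rightarrow> (nat \<times> nat \<times> sgn) set \<Rightarrow> (nat \<Rightarrow> nat) \<Rightarrow> nat \<Rightarrow> ((nat \<Rightarrow> nat) \<Rightarrow> nat) \<Rightarrow> bool" where
  "preceq_mono I R m v f \<longleftrightarrow>
     (\<forall>a \<in> Omega I m v. \<forall>b \<in> Omega I m v. preceq I R v a b \<longrightarrow> f a \<le> f b)"

lemma preceq_monoD:
  "preceq_mono I R m v f \<Longrightarrow> a \<in> Omega I m v \<Longrightarrow> b \<in> Omega I m v \<Longrightarrow> preceq I R v a b \<Longrightarrow> f a \<le> f b"
  by (simp add: preceq_mono_def)

lemma preceq_mono_cong:
  "(\<And>a. a \<in> Omega I m v \<Longrightarrow> f a = g a) \<Longrightarrow> preceq_mono I R m v f \<longleftrightarrow> preceq_mono I R m v g"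
  by (simp add: preceq_mono_def)

lemma preceq_mono_Act_step:
  assumes "preceq_mono I R m v f" "(u, v, Act) \<in> R" "u \<in> reg I v" "w \<in> Omega I m v" "k \<le> m u"
  shows "f (w(u := k - 1)) \<le> f (w(u := k))"
proof -
  have "w(u := k - 1) \<in> Omega I m v" "w(u := k) \<in> Omega I m v"
    using Omega_fun_upd assms(3-5) by simp_all
  then show ?thesis using preceq_monoD[OF assms(1)] preceq_Act_step[OF assms(2)] by blast
qed

lemma preceq_mono_Inh_step:
  assumes "preceq_mono I R m v f" "(u, v, Inh) \<in> R" "(u, v, Act) \<notin> R" "u \<in> reg I v"
    "w \<in> Omega I m v" "k \<le> m u"
  shows "f (w(u := k)) \<le> f (w(u := k - 1))"
proof -
  have "w(u := k - 1) \<in> Omega I m v" "w(u := k) \<in> Omega I m v"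
    using Omega_fun_upd assms(4-6) by simp_all
  then show ?thesis using preceq_monoD[OF assms(1)] preceq_Inh_step[OF assms(2,3)] by blast
qed

lemma preceq_fun_upd_left:
  assumes "preceq I R v a b"
    and "if (u, v, Act) \<in> R then k \<le> b u else if (u, v, Inh) \<in> R then b u \<le> k else k = b u"
  shows "preceq I R v (a(u := k)) b"
  using assms unfolding preceq_def by simp

lemma ex_step_towards:
  assumes Act: "\<And>u w k. (u, v, Act) \<in> R \<Longrightarrow> w \<in> Omega I m v \<Longrightarrow> k \<in> {1..m u} \<Longrightarrow>
                f (w(u := k - 1)) \<le> f (w(u := k))"
    and Inh: "\<And>u w k. (u, v, Inh) \<in> R \<Longrightarrow> w \<in> Omega I m v \<Longrightarrow> k \<in> {1..m u} \<Longrightarrow>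
                f (w(u := k)) \<le> f (w(u := k - 1))"
    and a: "a \<in> Omega I m v" and b: "b \<in> Omega I m v" and ab: "preceq I R v a b"
    and u: "u \<in> reg I v" "a u \<noteq> b u"
  obtains k where "a(u := k) \<in> Omega I m v" "preceq I R v (a(u := k)) b" "f a \<le> f (a(u := k))"
    "(k - b u) + (b u - k) < (a u - b u) + (b u - a u)"
proof -
  have "if (u, v, Act) \<in> R then a u \<le> b u else if (u, v, Inh) \<in> R then b u \<le> a u else a u = b u"
    using ab u(1) unfolding preceq_def by blast
  with u(2) consider "(u, v, Act) \<in> R" "a u < b u" | "(u, v, Act) \<notin> R" "(u, v, Inh) \<in> R" "b u < a u"
    by (auto split: if_splits)
  then show thesis
  proof cases
    case 1
    have k: "a u + 1 \<le> m u" using 1 Omega_le[OF b, of u] by simp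
    have a': "a(u := a u + 1) \<in> Omega I m v" using Omega_fun_upd[OF a u(1) k] .
    have "f ((a(u := a u + 1))(u := a u + 1 - 1)) \<le> f ((a(u := a u + 1))(u := a u + 1))"
      using Act[OF 1(1) a', of "a u + 1"] k by simp
    then have "f a \<le> f (a(u := a u + 1))" by simp
    moreover have "preceq I R v (a(u := a u + 1)) b"
      using preceq_fun_upd_left[OF ab] 1 by simp
    ultimately show thesis using that[of "a u + 1"] a' 1(2) by simp
  next
    case 2
    have k: "a u \<in> {1..m u}" using 2 Omega_le[OF a, of u] by simp
    have a': "a(u := a u - 1) \<in> Omega I m v" using Omega_fun_upd[OF a u(1), of "a u - 1"] k by auto
    have "f (a(u := a u)) \<le> f (a(u := a u - 1))" using Inh[OF 2(2) a k] .
    then have "f a \<le> f (a(u := a u - 1))" by simp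
    moreover have "preceq I R v (a(u := a u - 1)) b"
      using preceq_fun_upd_left[OF ab] 2 by simp
    ultimately show thesis using that[of "a u - 1"] a' 2(3) by simp
  qed
qed

lemma preceq_monoI_steps:
  assumes fin: "finite (reg I v)"
    and Act: "\<And>u w k. (u, v, Act) \<in> R \<Longrightarrow> w \<in> Omega I m v \<Longrightarrow> k \<in> {1..m u} \<Longrightarrow>
                f (w(u := k - 1)) \<le> f (w(u := k))"
    and Inh: "\<And>u w k. (u, v, Inh) \<in> R \<Longrightarrow> w \<in> Omega I m v \<Longrightarrow> k \<in> {1..m u} \<Longrightarrow>
                f (w(u := k)) \<le> f (w(u := k - 1))"
  shows "preceq_mono I R m v f"
  unfolding preceq_mono_def
proof (intro ballI impI)
  fix a b assume "a \<in> Omega I m v" "b \<in> Omega I m v" "preceq I R v a b"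
  then show "f a \<le> f b"
  proof (induction "\<Sum>u\<in>reg I v. (a u - b u) + (b u - a u)" arbitrary: a rule: less_induct)
    case (less a)
    show ?case
    proof (cases "\<forall>u \<in> reg I v. a u = b u")
      case True
      then have "a = b" using Omega_eqI less.prems(1,2) by blast
      then show ?thesis by simp
    next
      case False
      then obtain u where u: "u \<in> reg I v" "a u \<noteq> b u" by blast
      obtain k where k: "a(u := k) \<in> Omega I m v" "preceq I R v (a(u := k)) b" "f a \<le> f (a(u := k))"
        "(k - b u) + (b u - k) < (a u - b u) + (b u - a u)"
        using ex_step_towards[OF Act Inh less.prems u] by blast
      have "(\<Sum>w\<in>reg I v. ((a(u := k)) w - b w) + (b w - (a(u := k)) w))
          < (\<Sum>w\<in>reg I v. (a w - b w) + (b w - a w))"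
        using k(4) u(1) by (intro sum_strict_mono_ex1[OF fin]) auto
      then have "f (a(u := k)) \<le> f b" using less.hyps k(1,2) less.prems(2) by blast
      with k(3) show ?thesis by simp
    qed
  qed
qed

section \<open>Monotone interpolation\<close>

definition depends_on :: "(nat \<times> nat) set \<Rightarrow> (nat \<Rightarrow> nat) \<Rightarrow> nat \<Rightarrow> ((nat \<Rightarrow> nat) \<Rightarrow> nat) \<Rightarrow> nat \<Rightarrow> bool" where
  "depends_on I m v f u \<longleftrightarrow> (\<exists>w \<in> Omega I m v. \<exists>k \<in> {1..m u}. f (w(u := k)) \<noteq> f (w(u := k - 1)))"

lemma depends_on_cong:
  assumes "u \<in> reg I v" "\<And>a. a \<in> Omega I m v \<Longrightarrow> f a = g a"
  shows "depends_on I m v f u \<longleftrightarrow> depends_on I m v g u"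
  unfolding depends_on_def
proof (intro bex_cong refl)
  fix w k assume "w \<in> Omega I m v" "k \<in> {1..m u}"
  then have "w(u := k) \<in> Omega I m v" "w(u := k - 1) \<in> Omega I m v"
    using Omega_fun_upd[of w I m v u] assms(1) by auto
  then show "f (w(u := k)) \<noteq> f (w(u := k - 1)) \<longleftrightarrow> g (w(u := k)) \<noteq> g (w(u := k - 1))"
    using assms(2) by simp
qed

lemma not_depends_on_fun_upd_eq:
  assumes indep: "\<not> depends_on I m v f u" and a: "a \<in> Omega I m v" and k: "k \<le> m u"
  shows "f (a(u := k)) = f a"
proof -
  have "f (a(u := j)) = f (a(u := 0))" if "j \<le> m u" for j
    using that
  proof (induction j)
    case (Suc j)
    then have "f (a(u := Suc j)) = f (a(u := j))"
      using indep a unfolding depends_on_def by fastforce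
    also have "\<dots> = f (a(u := 0))"
      using Suc.IH Suc.prems Suc_leD by blast
    finally show ?case .
  qed simp
  from this[OF k] this[OF Omega_le[OF a]] show ?thesis by simp
qed

lemma ex_other_value:
  assumes "1 \<le> (m :: nat)"
  obtains k where "k \<le> m" "k \<noteq> j"
  using assms by (cases "j = 0") (auto intro: that[of 1] that[of 0])

lemma depends_on_fun_upd:
  assumes indep: "\<not> depends_on I m v f u\<^sub>0" and u\<^sub>0: "u\<^sub>0 \<in> reg I v" "1 \<le> m u\<^sub>0"
    and u: "u \<in> reg I v" "1 \<le> m u" and x: "x \<in> Omega I m v" and c: "c \<noteq> f x"
  shows "depends_on I m v (f(x := c)) u"
proof (rule ccontr)
  assume indep': "\<not> depends_on I m v (f(x := c)) u"
  obtain k\<^sub>0 where k\<^sub>0: "k\<^sub>0 \<le> m u\<^sub>0" "k\<^sub>0 \<noteq> x u\<^sub>0" using ex_other_value[OF u\<^sub>0(2)] .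
  have x\<^sub>0: "x(u\<^sub>0 := k\<^sub>0) \<in> Omega I m v" using Omega_fun_upd[OF x u\<^sub>0(1) k\<^sub>0(1)] .
  have "x(u\<^sub>0 := k\<^sub>0) \<noteq> x" using k\<^sub>0(2) by (metis fun_upd_same)
  then have fx\<^sub>0: "(f(x := c)) (x(u\<^sub>0 := k\<^sub>0)) = f x"
    using not_depends_on_fun_upd_eq[OF indep x k\<^sub>0(1)] by simp
  show False
  proof (cases "u = u\<^sub>0")
    case True
    then show False
      using not_depends_on_fun_upd_eq[OF indep' x] k\<^sub>0(1) fx\<^sub>0 c by simp
  next
    case False
    obtain k where k: "k \<le> m u" "k \<noteq> x u" using ex_other_value[OF u(2)] .
    define q where "q = x(u\<^sub>0 := k\<^sub>0, u := k)"
    have q: "q \<in> Omega I m v" unfolding q_def using Omega_fun_upd[OF x\<^sub>0 u(1) k(1)] .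
    have "x(u := k) \<noteq> x" "q \<noteq> x" using k(2) False by (auto simp: q_def fun_eq_iff)
    have "(f(x := c)) q = f (q(u\<^sub>0 := x u\<^sub>0))"
      using \<open>q \<noteq> x\<close> not_depends_on_fun_upd_eq[OF indep q Omega_le[OF x]] by simp
    also have "q(u\<^sub>0 := x u\<^sub>0) = x(u := k)"
      using False by (simp add: q_def fun_eq_iff)
    also have "f (x(u := k)) = (f(x := c)) (x(u := k))"
      using \<open>x(u := k) \<noteq> x\<close> by simp
    also have "\<dots> = c"
      using not_depends_on_fun_upd_eq[OF indep' x k(1)] by simp
    finally have "(f(x := c)) q = c" .
    moreover have "(f(x := c)) q = (f(x := c)) (x(u\<^sub>0 := k\<^sub>0))"
    proof -
      have "q(u := x u) = x(u\<^sub>0 := k\<^sub>0)"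
        using False by (simp add: q_def fun_eq_iff)
      then show ?thesis
        using not_depends_on_fun_upd_eq[OF indep' q Omega_le[OF x]] by metis
    qed
    ultimately show False using fx\<^sub>0 c by simp
  qed
qed

definition rank :: "(nat \<times> nat) set \<Rightarrow> (nat \<times> nat \<times> sgn) set \<Rightarrow> (nat \<Rightarrow> nat) \<Rightarrow> nat \<Rightarrow> (nat \<Rightarrow> nat) \<Rightarrow> nat" where
  "rank I R m v w =
     (\<Sum>u \<in> reg I v. if (u, v, Act) \<in> R then w u else if (u, v, Inh) \<in> R then m u - w u else 0)"

lemma rank_strict_mono:
  assumes fin: "finite (reg I v)" and a: "a \<in> Omega I m v" and b: "b \<in> Omega I m v"
    and ab: "prec I R v a b"
  shows "rank I R m v a < rank I R m v b"
proof -
  define s where "s w u = (if (u, v, Act) \<in> R then w u else if (u, v, Inh) \<in> R then m u - w u else 0)"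
    for w u
  have coord: "if (u, v, Act) \<in> R then a u \<le> b u else if (u, v, Inh) \<in> R then b u \<le> a u else a u = b u"
    if "u \<in> reg I v" for u
    using ab that unfolding prec_def preceq_def by blast
  have "s a u \<le> s b u" if "u \<in> reg I v" for u
    using coord[OF that] unfolding s_def by (auto simp: diff_le_mono2)
  moreover obtain u where u: "u \<in> reg I v" "a u \<noteq> b u"
    using Omega_eqI[OF a b] ab unfolding prec_def by blast
  then have "s a u < s b u"
    using coord[OF u(1)] Omega_le[OF a, of u] unfolding s_def by (auto simp: diff_less_mono2 split: if_splits)
  ultimately have "sum (s a) (reg I v) < sum (s b) (reg I v)"
    using u(1) by (intro sum_strict_mono_ex1[OF fin]) auto
  then show ?thesis by (simp add: rank_def s_def)
qed

lemma rank_le: "a \<in> Omega I m v \<Longrightarrow> rank I R m v a \<le> (\<Sum>u \<in> reg I v. m u)"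
  unfolding rank_def by (rule sum_mono) (simp add: Omega_le le_diff_conv)

lemma ex_maximal_gap:
  fixes f g :: "(nat \<Rightarrow> nat) \<Rightarrow> 'a::linorder"
  assumes fin: "finite (reg I v)" and x\<^sub>0: "x\<^sub>0 \<in> Omega I m v" "f x\<^sub>0 < g x\<^sub>0"
  shows "\<exists>x \<in> Omega I m v. f x < g x \<and> (\<forall>b \<in> Omega I m v. prec I R v x b \<longrightarrow> g b \<le> f b)"
proof -
  obtain x where x: "x \<in> Omega I m v \<and> f x < g x"
    and greatest: "\<And>b. b \<in> Omega I m v \<and> f b < g b \<Longrightarrow> rank I R m v b \<le> rank I R m v x"
    using ex_has_greatest_nat[of "\<lambda>b. b \<in> Omega I m v \<and> f b < g b" x\<^sub>0 "rank I R m v"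
        "Suc (\<Sum>u \<in> reg I v. m u)"] x\<^sub>0 rank_le by (metis le_imp_less_Suc)
  have "g b \<le> f b" if b: "b \<in> Omega I m v" "prec I R v x b" for b
  proof (rule ccontr)
    assume "\<not> g b \<le> f b"
    with greatest[of b] b(1) have "rank I R m v b \<le> rank I R m v x"
      by (meson not_le)
    moreover have "rank I R m v x < rank I R m v b"
      using rank_strict_mono[OF fin] x b by blast
    ultimately show False by simp
  qed
  with x show ?thesis by blast
qed

lemma preceq_mono_raise_maximal_gap:
  assumes f: "preceq_mono I R m v f" and g: "preceq_mono I R m v g"
    and x: "x \<in> Omega I m v" "f x < g x"
    and maximal: "\<And>b. b \<in> Omega I m v \<Longrightarrow> prec I R v x b \<Longrightarrow> g b \<le> f b"
  shows "preceq_mono I R m v (f(x := f x + 1))"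
  unfolding preceq_mono_def
proof (intro ballI impI)
  fix a b assume a: "a \<in> Omega I m v" and b: "b \<in> Omega I m v" and ab: "preceq I R v a b"
  consider "a = b" | "a \<noteq> b" "a = x" | "a \<noteq> x" by blast
  then show "(f(x := f x + 1)) a \<le> (f(x := f x + 1)) b"
  proof cases
    case 2
    have "g x \<le> g b"
      using preceq_monoD[OF g x(1) b] ab 2 by blast
    moreover have "g b \<le> f b"
      using maximal[OF b] ab 2 unfolding prec_def by blast
    ultimately show ?thesis using 2 x(2) by simp
  next
    case 3
    have "f a \<le> f b" using preceq_monoD[OF f a b ab] .
    then show ?thesis using 3 by (cases "b = x") simp_all
  qed simp
qed

lemma ex_preceq_mono_between:
  fixes f g :: "(nat \<Rightarrow> nat) \<Rightarrow> nat"
  assumes fin: "finite (reg I v)"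
    and f: "preceq_mono I R m v f" and g: "preceq_mono I R m v g"
    and fg: "\<And>a. a \<in> Omega I m v \<Longrightarrow> f a \<le> g a"
    and gap: "x\<^sub>0 \<in> Omega I m v" "f x\<^sub>0 < g x\<^sub>0"
    and observable_reg: "\<And>u. (u, v, Obs) \<in> R \<Longrightarrow> u \<in> reg I v \<and> 1 \<le> m u"
  obtains F where "preceq_mono I R m v F"
    "\<And>a. a \<in> Omega I m v \<Longrightarrow> f a \<le> F a \<and> F a \<le> g a"
    "\<And>u. (u, v, Obs) \<in> R \<Longrightarrow> depends_on I m v F u"
proof (cases "\<forall>u. (u, v, Obs) \<in> R \<longrightarrow> depends_on I m v f u")
  case True
  show thesis
    by (rule that[of f]) (use f fg True in auto)
next
  case False
  then obtain u\<^sub>0 where u\<^sub>0: "(u\<^sub>0, v, Obs) \<in> R" "\<not> depends_on I m v f u\<^sub>0" by blast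
  obtain x where x: "x \<in> Omega I m v" "f x < g x"
    and maximal: "\<And>b. b \<in> Omega I m v \<Longrightarrow> prec I R v x b \<Longrightarrow> g b \<le> f b"
    using ex_maximal_gap[where f = f and g = g and R = R, OF fin gap] by blast
  show thesis
  proof (rule that[of "f(x := f x + 1)"])
    show "preceq_mono I R m v (f(x := f x + 1))"
      using preceq_mono_raise_maximal_gap[where f = f and g = g, OF f g x maximal] .
  next
    fix a assume "a \<in> Omega I m v"
    then show "f a \<le> (f(x := f x + 1)) a \<and> (f(x := f x + 1)) a \<le> g a"
      using fg[of a] x(2) by (cases "a = x") simp_all
  next
    fix u assume "(u, v, Obs) \<in> R"
    then show "depends_on I m v (f(x := f x + 1)) u"
      using depends_on_fun_upd[OF u\<^sub>0(2) _ _ _ _ x(1)] observable_reg[of u] observable_reg[OF u\<^sub>0(1)] by simp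
  qed
qed

section \<open>Parametrisations\<close>

lemma finite_reg: "I \<subseteq> Vset n \<times> Vset n \<Longrightarrow> finite (reg I v)"
  by (rule finite_subset[of _ "{1..n}"]) (auto simp: reg_def Vset_def)

lemma well_formed_reg: "well_formed I R \<Longrightarrow> (u, v, c) \<in> R \<Longrightarrow> u \<in> reg I v"
  unfolding well_formed_def by fast

lemma well_formed_Inh_not_Act: "well_formed I R \<Longrightarrow> (u, v, Inh) \<in> R \<Longrightarrow> (u, v, Act) \<notin> R"
  unfolding well_formed_def by blast

lemma Params_le: "P \<in> Params n I m \<Longrightarrow> P v w \<le> m v"
  unfolding Params_def by (cases "v \<in> Vset n \<and> w \<in> Omega I m v") auto

lemma pR_Params: "P \<in> pR n I m R T \<Longrightarrow> P \<in> Params n I m"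
  by (simp add: pR_def p_def)

lemma pR_Ptrans: "P \<in> pR n I m R T \<Longrightarrow> t \<in> T \<Longrightarrow> P \<in> Ptrans n I m t"
  by (simp add: pR_def p_def)

lemma pR_Pconstr: "P \<in> pR n I m R T \<Longrightarrow> r \<in> R \<Longrightarrow> P \<in> Pconstr n I m r"
  by (simp add: pR_def)

lemma pR_iff:
  "P \<in> pR n I m R T \<longleftrightarrow> P \<in> Params n I m \<and> (\<forall>t \<in> T. P \<in> Ptrans n I m t) \<and> (\<forall>r \<in> R. P \<in> Pconstr n I m r)"
  by (auto simp: pR_def p_def)

lemma pR_preceq_mono:
  assumes "I \<subseteq> Vset n \<times> Vset n" "P \<in> pR n I m R T"
  shows "preceq_mono I R m v (P v)"
proof (rule preceq_monoI_steps[OF finite_reg[OF assms(1)]])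
  fix u w k assume "(u, v, Act) \<in> R" "w \<in> Omega I m v" "k \<in> {1..m u}"
  then show "P v (w(u := k - 1)) \<le> P v (w(u := k))"
    using pR_Pconstr[OF assms(2)] unfolding Pconstr_def by fastforce
next
  fix u w k assume "(u, v, Inh) \<in> R" "w \<in> Omega I m v" "k \<in> {1..m u}"
  then show "P v (w(u := k)) \<le> P v (w(u := k - 1))"
    using pR_Pconstr[OF assms(2)] unfolding Pconstr_def by fastforce
qed

lemma pR_Obs_regulator:
  assumes "well_formed I R" "P \<in> pR n I m R T" "(u, v, Obs) \<in> R"
  shows "u \<in> reg I v \<and> 1 \<le> m u"
  using pR_Pconstr[OF assms(2,3)] well_formed_reg[OF assms(1,3)] by (auto simp: Pconstr_def)

lemma finite_pR_values: "finite {P v w |P. P \<in> pR n I m R T}"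
  by (rule finite_subset[of _ "{..m v}"]) (auto dest: pR_Params Params_le)

lemma Lb_le: "P \<in> pR n I m R T \<Longrightarrow> Lb n I m R T v w \<le> P v w"
  unfolding Lb_def by (rule Min_le[OF finite_pR_values]) auto

lemma Ub_ge: "P \<in> pR n I m R T \<Longrightarrow> P v w \<le> Ub n I m R T v w"
  unfolding Ub_def by (rule Max_ge[OF finite_pR_values]) auto

lemma ex_pR_eq_Lb:
  assumes "pR n I m R T \<noteq> {}"
  obtains P where "P \<in> pR n I m R T" "P v w = Lb n I m R T v w"
proof -
  have "{P v w |P. P \<in> pR n I m R T} \<noteq> {}" using assms by blast
  from Min_in[OF finite_pR_values this] obtain P
    where "P \<in> pR n I m R T" "P v w = Min {P v w |P. P \<in> pR n I m R T}"
    by auto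
  then show thesis using that by (simp add: Lb_def)
qed

lemma ex_pR_eq_Ub:
  assumes "pR n I m R T \<noteq> {}"
  obtains P where "P \<in> pR n I m R T" "P v w = Ub n I m R T v w"
proof -
  have "{P v w |P. P \<in> pR n I m R T} \<noteq> {}" using assms by blast
  from Max_in[OF finite_pR_values this] obtain P
    where "P \<in> pR n I m R T" "P v w = Max {P v w |P. P \<in> pR n I m R T}"
    by auto
  then show thesis using that by (simp add: Ub_def)
qed

lemma Ub_le: "pR n I m R T \<noteq> {} \<Longrightarrow> Ub n I m R T v w \<le> m v"
  by (metis ex_pR_eq_Ub pR_Params Params_le)

lemma Lb_preceq_mono:
  assumes "I \<subseteq> Vset n \<times> Vset n" "pR n I m R T \<noteq> {}"
  shows "preceq_mono I R m v (Lb n I m R T v)"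
  unfolding preceq_mono_def
proof (intro ballI impI)
  fix a b assume ab: "a \<in> Omega I m v" "b \<in> Omega I m v" "preceq I R v a b"
  obtain P where P: "P \<in> pR n I m R T" "P v b = Lb n I m R T v b"
    using ex_pR_eq_Lb[OF assms(2)] .
  have "Lb n I m R T v a \<le> P v a" using Lb_le[OF P(1)] .
  also have "\<dots> \<le> P v b" using preceq_monoD[OF pR_preceq_mono[OF assms(1) P(1)] ab] .
  finally show "Lb n I m R T v a \<le> Lb n I m R T v b" using P(2) by simp
qed

lemma Ub_preceq_mono:
  assumes "I \<subseteq> Vset n \<times> Vset n" "pR n I m R T \<noteq> {}"
  shows "preceq_mono I R m v (Ub n I m R T v)"
  unfolding preceq_mono_def
proof (intro ballI impI)
  fix a b assume ab: "a \<in> Omega I m v" "b \<in> Omega I m v" "preceq I R v a b"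
  obtain P where P: "P \<in> pR n I m R T" "P v a = Ub n I m R T v a"
    using ex_pR_eq_Ub[OF assms(2)] .
  have "P v a \<le> P v b" using preceq_monoD[OF pR_preceq_mono[OF assms(1) P(1)] ab] .
  also have "\<dots> \<le> Ub n I m R T v b" using Ub_ge[OF P(1)] .
  finally show "Ub n I m R T v a \<le> Ub n I m R T v b" using P(2) by simp
qed

lemma Ptrans_cong:
  "P \<in> Ptrans n I m (x, v, b, y) \<Longrightarrow> Q \<in> Params n I m \<Longrightarrow> Q v = P v \<Longrightarrow> Q \<in> Ptrans n I m (x, v, b, y)"
  by (auto simp: Ptrans_def)

lemma Ptrans_between:
  assumes "P\<^sub>1 \<in> Ptrans n I m (x, v, b, y)" "P\<^sub>2 \<in> Ptrans n I m (x, v, b, y)" "Q \<in> Params n I m"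
    "P\<^sub>1 v (omega_of I v x) \<le> Q v (omega_of I v x)" "Q v (omega_of I v x) \<le> P\<^sub>2 v (omega_of I v x)"
  shows "Q \<in> Ptrans n I m (x, v, b, y)"
  using assms by (cases b) (simp_all add: Ptrans_def)

lemma Pconstr_cong:
  "P \<in> Pconstr n I m (u, v, c) \<Longrightarrow> Q \<in> Params n I m \<Longrightarrow> Q v = P v \<Longrightarrow> Q \<in> Pconstr n I m (u, v, c)"
  by (cases c) (simp_all add: Pconstr_def)

lemma pR_replace_component:
  assumes wf: "well_formed I R" and P\<^sub>0: "P\<^sub>0 \<in> pR n I m R T" and Q: "Q \<in> Params n I m"
    and other: "\<And>v'. v' \<noteq> v \<Longrightarrow> Q v' = P\<^sub>0 v'"
    and lower: "\<And>w. \<exists>P \<in> pR n I m R T. P v w \<le> Q v w"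
    and upper: "\<And>w. \<exists>P \<in> pR n I m R T. Q v w \<le> P v w"
    and mono: "preceq_mono I R m v (Q v)"
    and observable: "\<And>u. (u, v, Obs) \<in> R \<Longrightarrow> depends_on I m v (Q v) u"
  shows "Q \<in> pR n I m R T"
  unfolding pR_iff
proof (intro conjI ballI Q)
  fix t assume t: "t \<in> T"
  obtain x v' b y where t_def: "t = (x, v', b, y)" by (cases t)
  show "Q \<in> Ptrans n I m t"
  proof (cases "v' = v")
    case True
    obtain P\<^sub>1 P\<^sub>2 where P: "P\<^sub>1 \<in> pR n I m R T" "P\<^sub>1 v (omega_of I v x) \<le> Q v (omega_of I v x)"
      "P\<^sub>2 \<in> pR n I m R T" "Q v (omega_of I v x) \<le> P\<^sub>2 v (omega_of I v x)"
      using lower upper by blast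
    from t have "P\<^sub>1 \<in> Ptrans n I m (x, v, b, y)" "P\<^sub>2 \<in> Ptrans n I m (x, v, b, y)"
      using pR_Ptrans[OF P(1)] pR_Ptrans[OF P(3)] unfolding t_def True by blast+
    from Ptrans_between[OF this Q P(2) P(4)] show ?thesis unfolding t_def True .
  next
    case False
    from t have "P\<^sub>0 \<in> Ptrans n I m (x, v', b, y)" using pR_Ptrans[OF P\<^sub>0] unfolding t_def by blast
    from Ptrans_cong[OF this Q other[OF False]] show ?thesis unfolding t_def .
  qed
next
  fix r assume r: "r \<in> R"
  obtain u v' c where r_def: "r = (u, v', c)" by (cases r)
  show "Q \<in> Pconstr n I m r"
  proof (cases "v' = v")
    case False
    from r have "P\<^sub>0 \<in> Pconstr n I m (u, v', c)" using pR_Pconstr[OF P\<^sub>0] unfolding r_def by blast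
    from Pconstr_cong[OF this Q other[OF False]] show ?thesis unfolding r_def .
  next
    case True
    with r have u: "u \<in> reg I v" and r': "(u, v, c) \<in> R"
      using well_formed_reg[OF wf] unfolding r_def by blast+
    show ?thesis
    proof (cases c)
      case Act
      then show ?thesis
        using preceq_mono_Act_step[OF mono _ u] r' Q unfolding r_def True Pconstr_def by simp
    next
      case Inh
      then show ?thesis
        using preceq_mono_Inh_step[OF mono _ _ u] well_formed_Inh_not_Act[OF wf] r' Q
        unfolding r_def True Pconstr_def by simp
    next
      case Obs
      then show ?thesis
        using observable r' Q unfolding r_def True Pconstr_def depends_on_def by simp
    qed
  qed
qed

lemma ex_pR_with_component:
  assumes wf: "well_formed I R" and nonempty: "pR n I m R T \<noteq> {}" and v: "v \<in> Vset n"
    and mono: "preceq_mono I R m v F"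
    and between: "\<And>a. a \<in> Omega I m v \<Longrightarrow> Lb n I m R T v a \<le> F a \<and> F a \<le> Ub n I m R T v a"
    and observable: "\<And>u. (u, v, Obs) \<in> R \<Longrightarrow> depends_on I m v F u"
  obtains P where "P \<in> pR n I m R T" "\<And>a. a \<in> Omega I m v \<Longrightarrow> P v a = F a"
proof -
  obtain P\<^sub>0 where P\<^sub>0: "P\<^sub>0 \<in> pR n I m R T" using nonempty by blast
  define Q where "Q v' w = (if v' = v \<and> w \<in> Omega I m v then F w else P\<^sub>0 v' w)" for v' w
  have Q_v: "Q v a = F a" if "a \<in> Omega I m v" for a
    using that by (simp add: Q_def)
  have Q_other: "Q v' = P\<^sub>0 v'" if "v' \<noteq> v" for v'
    using that by (simp add: Q_def fun_eq_iff)
  have "Q \<in> Params n I m"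
    unfolding Params_def
  proof (intro CollectI allI conjI impI)
    fix v' w assume "v' \<in> Vset n \<and> w \<in> Omega I m v'"
    show "Q v' w \<le> m v'"
    proof (cases "v' = v \<and> w \<in> Omega I m v")
      case True
      then show ?thesis using between[of w] Ub_le[OF nonempty, of v w] by (simp add: Q_def)
    next
      case False
      then have "Q v' w = P\<^sub>0 v' w" by (auto simp: Q_def)
      then show ?thesis using Params_le[OF pR_Params[OF P\<^sub>0]] by simp
    qed
  next
    fix v' w assume "\<not> (v' \<in> Vset n \<and> w \<in> Omega I m v')"
    with v have "Q v' w = P\<^sub>0 v' w" by (auto simp: Q_def)
    with pR_Params[OF P\<^sub>0] \<open>\<not> (v' \<in> Vset n \<and> w \<in> Omega I m v')\<close> show "Q v' w = 0"
      unfolding Params_def by auto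
  qed
  moreover have "\<exists>P \<in> pR n I m R T. P v w \<le> Q v w" for w
  proof (cases "w \<in> Omega I m v")
    case True
    obtain P where P: "P \<in> pR n I m R T" "P v w = Lb n I m R T v w" using ex_pR_eq_Lb[OF nonempty] .
    show ?thesis using P(2) True between[of w] Q_v[of w] by (intro bexI[OF _ P(1)]) simp
  next
    case False
    then show ?thesis using P\<^sub>0 by (auto simp: Q_def)
  qed
  moreover have "\<exists>P \<in> pR n I m R T. Q v w \<le> P v w" for w
  proof (cases "w \<in> Omega I m v")
    case True
    obtain P where P: "P \<in> pR n I m R T" "P v w = Ub n I m R T v w" using ex_pR_eq_Ub[OF nonempty] .
    show ?thesis using P(2) True between[of w] Q_v[of w] by (intro bexI[OF _ P(1)]) simp
  next
    case False
    then show ?thesis using P\<^sub>0 by (auto simp: Q_def)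
  qed
  moreover have "preceq_mono I R m v (Q v)"
    using mono preceq_mono_cong[where f = "Q v" and g = F] Q_v by blast
  moreover have "depends_on I m v (Q v) u" if "(u, v, Obs) \<in> R" for u
    using observable[OF that] depends_on_cong[OF well_formed_reg[OF wf that], where f = "Q v" and g = F] Q_v by blast
  ultimately have "Q \<in> pR n I m R T"
    using pR_replace_component[OF wf P\<^sub>0 _ Q_other] by blast
  then show thesis using that[of Q] Q_v by blast
qed

section \<open>Envelopes of observations\<close>

text \<open>The bounds l and u of the paper, but with \<preceq>_v in place of \<prec>_v, so that a consistent
  set of observations pins both envelopes to the observed values.\<close>

definition lower_env :: "(nat \<times> nat) set \<Rightarrow> (nat \<times> nat \<times> sgn) set \<Rightarrow> nat \<Rightarrow> ((nat \<Rightarrow> nat) \<Rightarrow> nat)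
    \<Rightarrow> ((nat \<Rightarrow> nat) \<times> nat) set \<Rightarrow> (nat \<Rightarrow> nat) \<Rightarrow> nat" where
  "lower_env I R v L Ob a = Max ({k. \<exists>b. (b, k) \<in> Ob \<and> preceq I R v b a} \<union> {L a})"

definition upper_env :: "(nat \<times> nat) set \<Rightarrow> (nat \<times> nat \<times> sgn) set \<Rightarrow> nat \<Rightarrow> ((nat \<Rightarrow> nat) \<Rightarrow> nat)
    \<Rightarrow> ((nat \<Rightarrow> nat) \<times> nat) set \<Rightarrow> (nat \<Rightarrow> nat) \<Rightarrow> nat" where
  "upper_env I R v U Ob a = Min ({k. \<exists>b. (b, k) \<in> Ob \<and> preceq I R v a b} \<union> {U a})"

definition consistent_obs :: "(nat \<times> nat) set \<Rightarrow> (nat \<times> nat \<times> sgn) set \<Rightarrow> nat \<Rightarrow> ((nat \<Rightarrow> nat) \<Rightarrow> nat)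
    \<Rightarrow> ((nat \<Rightarrow> nat) \<Rightarrow> nat) \<Rightarrow> ((nat \<Rightarrow> nat) \<times> nat) set \<Rightarrow> bool" where
  "consistent_obs I R v L U Ob \<longleftrightarrow> (\<forall>(a, k) \<in> Ob. L a \<le> k \<and> k \<le> U a) \<and>
     (\<forall>(a, k) \<in> Ob. \<forall>(b, j) \<in> Ob. preceq I R v a b \<longrightarrow> k \<le> j)"

lemma finite_obs_values: "finite Ob \<Longrightarrow> finite ({k. \<exists>b. (b, k) \<in> Ob \<and> P b} \<union> {c})"
  by (rule finite_subset[of _ "snd ` Ob \<union> {c}"]) (auto intro: rev_image_eqI)

lemma lower_env_le_iff:
  "finite Ob \<Longrightarrow> lower_env I R v L Ob a \<le> c \<longleftrightarrow> L a \<le> c \<and> (\<forall>(b, k) \<in> Ob. preceq I R v b a \<longrightarrow> k \<le> c)"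
  unfolding lower_env_def by (subst Max_le_iff[OF finite_obs_values]) auto

lemma le_upper_env_iff:
  "finite Ob \<Longrightarrow> c \<le> upper_env I R v U Ob a \<longleftrightarrow> c \<le> U a \<and> (\<forall>(b, k) \<in> Ob. preceq I R v a b \<longrightarrow> c \<le> k)"
  unfolding upper_env_def by (subst Min_ge_iff[OF finite_obs_values]) auto

lemma lo_le_iff:
  "finite Ob \<Longrightarrow> lo n I m R T v a Ob \<le> c \<longleftrightarrow>
     Lb n I m R T v a \<le> c \<and> (\<forall>(b, k) \<in> Ob. prec I R v b a \<longrightarrow> k \<le> c)"
  unfolding lo_def by (subst Max_le_iff[OF finite_obs_values]) auto

lemma le_up_iff:
  "finite Ob \<Longrightarrow> c \<le> up n I m R T v a Ob \<longleftrightarrow>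
     c \<le> Ub n I m R T v a \<and> (\<forall>(b, k) \<in> Ob. prec I R v a b \<longrightarrow> c \<le> k)"
  unfolding up_def by (subst Min_ge_iff[OF finite_obs_values]) auto

lemma lo_eq_lower_env:
  assumes "finite Ob" "a \<notin> fst ` Ob"
  shows "lo n I m R T v a Ob = lower_env I R v (Lb n I m R T v) Ob a"
proof -
  have "b \<noteq> a" if "(b, k) \<in> Ob" for b k
    using assms(2) that by (metis fst_conv image_eqI)
  then have "(\<forall>(b, k) \<in> Ob. prec I R v b a \<longrightarrow> k \<le> c) \<longleftrightarrow> (\<forall>(b, k) \<in> Ob. preceq I R v b a \<longrightarrow> k \<le> c)" for c
    unfolding prec_def by blast
  then have "lo n I m R T v a Ob \<le> c \<longleftrightarrow> lower_env I R v (Lb n I m R T v) Ob a \<le> c" for c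
    by (simp add: lo_le_iff[OF assms(1)] lower_env_le_iff[OF assms(1)])
  then show ?thesis by (meson order_antisym order_refl)
qed

lemma up_eq_upper_env:
  assumes "finite Ob" "a \<notin> fst ` Ob"
  shows "up n I m R T v a Ob = upper_env I R v (Ub n I m R T v) Ob a"
proof -
  have "b \<noteq> a" if "(b, k) \<in> Ob" for b k
    using assms(2) that by (metis fst_conv image_eqI)
  then have "(\<forall>(b, k) \<in> Ob. prec I R v a b \<longrightarrow> c \<le> k) \<longleftrightarrow> (\<forall>(b, k) \<in> Ob. preceq I R v a b \<longrightarrow> c \<le> k)" for c
    unfolding prec_def by blast
  then have "c \<le> up n I m R T v a Ob \<longleftrightarrow> c \<le> upper_env I R v (Ub n I m R T v) Ob a" for c
    by (simp add: le_up_iff[OF assms(1)] le_upper_env_iff[OF assms(1)])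
  then show ?thesis by (meson order_antisym order_refl)
qed

lemma lower_env_ge:
  assumes "finite Ob"
  shows "L a \<le> lower_env I R v L Ob a" "(b, k) \<in> Ob \<Longrightarrow> preceq I R v b a \<Longrightarrow> k \<le> lower_env I R v L Ob a"
  using lower_env_le_iff[OF assms, of I R v L a "lower_env I R v L Ob a"] by auto

lemma upper_env_le:
  assumes "finite Ob"
  shows "upper_env I R v U Ob a \<le> U a" "(b, k) \<in> Ob \<Longrightarrow> preceq I R v a b \<Longrightarrow> upper_env I R v U Ob a \<le> k"
  using le_upper_env_iff[OF assms, of "upper_env I R v U Ob a" I R v U a] by auto

lemma lower_env_obs:
  assumes "finite Ob" "consistent_obs I R v L U Ob" "(a, k) \<in> Ob"
  shows "lower_env I R v L Ob a = k"
proof (rule order_antisym)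
  show "lower_env I R v L Ob a \<le> k"
    using assms unfolding lower_env_le_iff[OF assms(1)] consistent_obs_def by blast
  show "k \<le> lower_env I R v L Ob a"
    using lower_env_ge(2)[OF assms(1) assms(3) preceq_refl] .
qed

lemma upper_env_obs:
  assumes "finite Ob" "consistent_obs I R v L U Ob" "(a, k) \<in> Ob"
  shows "upper_env I R v U Ob a = k"
proof (rule order_antisym)
  show "k \<le> upper_env I R v U Ob a"
    using assms unfolding le_upper_env_iff[OF assms(1)] consistent_obs_def by blast
  show "upper_env I R v U Ob a \<le> k"
    using upper_env_le(2)[OF assms(1) assms(3) preceq_refl] .
qed

lemma lower_env_preceq_mono:
  assumes "finite Ob" "preceq_mono I R m v L"
  shows "preceq_mono I R m v (lower_env I R v L Ob)"
  unfolding preceq_mono_def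
proof (intro ballI impI)
  fix a b assume ab: "a \<in> Omega I m v" "b \<in> Omega I m v" "preceq I R v a b"
  have "L a \<le> lower_env I R v L Ob b"
    using preceq_monoD[OF assms(2) ab] lower_env_ge(1)[OF assms(1), where I = I and R = R and v = v and L = L and a = b] by simp
  moreover have "k \<le> lower_env I R v L Ob b" if "(c, k) \<in> Ob" "preceq I R v c a" for c k
    using lower_env_ge(2)[OF assms(1) that(1) preceq_trans[OF that(2) ab(3)]] .
  ultimately show "lower_env I R v L Ob a \<le> lower_env I R v L Ob b"
    unfolding lower_env_le_iff[OF assms(1)] by blast
qed

lemma upper_env_preceq_mono:
  assumes "finite Ob" "preceq_mono I R m v U"
  shows "preceq_mono I R m v (upper_env I R v U Ob)"
  unfolding preceq_mono_def
proof (intro ballI impI)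
  fix a b assume ab: "a \<in> Omega I m v" "b \<in> Omega I m v" "preceq I R v a b"
  have "upper_env I R v U Ob a \<le> U b"
    using preceq_monoD[OF assms(2) ab] upper_env_le(1)[OF assms(1), where I = I and R = R and v = v and U = U and a = a] by simp
  moreover have "upper_env I R v U Ob a \<le> k" if "(c, k) \<in> Ob" "preceq I R v b c" for c k
    using upper_env_le(2)[OF assms(1) that(1) preceq_trans[OF ab(3) that(2)]] .
  ultimately show "upper_env I R v U Ob a \<le> upper_env I R v U Ob b"
    unfolding le_upper_env_iff[OF assms(1)] by blast
qed

lemma lower_env_le_upper_env:
  assumes fin: "finite Ob" and cons: "consistent_obs I R v L U Ob" and Ob: "fst ` Ob \<subseteq> Omega I m v"
    and L: "preceq_mono I R m v L" and U: "preceq_mono I R m v U"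
    and LU: "L a \<le> U a" and a: "a \<in> Omega I m v"
  shows "lower_env I R v L Ob a \<le> upper_env I R v U Ob a"
proof -
  have obs_Omega: "b \<in> Omega I m v" if "(b, k) \<in> Ob" for b k
    using Ob that by force
  have "L a \<le> k" if "(b, k) \<in> Ob" "preceq I R v a b" for b k
    using preceq_monoD[OF L a obs_Omega[OF that(1)] that(2)] cons that(1)
    unfolding consistent_obs_def by fastforce
  with LU have "L a \<le> upper_env I R v U Ob a"
    unfolding le_upper_env_iff[OF fin] by blast
  moreover have "k \<le> upper_env I R v U Ob a" if bk: "(b, k) \<in> Ob" "preceq I R v b a" for b k
  proof -
    have "k \<le> U a"
      using preceq_monoD[OF U obs_Omega[OF bk(1)] a bk(2)] cons bk(1)
      unfolding consistent_obs_def by fastforce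
    moreover have "k \<le> j" if "(c, j) \<in> Ob" "preceq I R v a c" for c j
      using cons bk(1) that(1) preceq_trans[OF bk(2) that(2)] unfolding consistent_obs_def by fast
    ultimately show ?thesis unfolding le_upper_env_iff[OF fin] by blast
  qed
  ultimately show ?thesis
    unfolding lower_env_le_iff[OF fin] by blast
qed

lemma ex_pR_realising_obs:
  assumes I: "I \<subseteq> Vset n \<times> Vset n" and wf: "well_formed I R" and nonempty: "pR n I m R T \<noteq> {}"
    and v: "v \<in> Vset n" and fin: "finite Ob" and Ob: "fst ` Ob \<subseteq> Omega I m v"
    and cons: "consistent_obs I R v (Lb n I m R T v) (Ub n I m R T v) Ob"
    and gap: "x \<in> Omega I m v - fst ` Ob" "lo n I m R T v x Ob < up n I m R T v x Ob"
  obtains P where "P \<in> pR n I m R T" "\<And>a k. (a, k) \<in> Ob \<Longrightarrow> P v a = k"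
proof -
  let ?L = "Lb n I m R T v" and ?U = "Ub n I m R T v"
  define f where "f = lower_env I R v ?L Ob"
  define g where "g = upper_env I R v ?U Ob"
  obtain P\<^sub>0 where P\<^sub>0: "P\<^sub>0 \<in> pR n I m R T" using nonempty by blast
  have L: "preceq_mono I R m v ?L" and U: "preceq_mono I R m v ?U"
    using Lb_preceq_mono[OF I nonempty] Ub_preceq_mono[OF I nonempty] .
  have f: "preceq_mono I R m v f" and g: "preceq_mono I R m v g"
    unfolding f_def g_def using lower_env_preceq_mono[OF fin L] upper_env_preceq_mono[OF fin U] .
  have fg: "f a \<le> g a" if "a \<in> Omega I m v" for a
    unfolding f_def g_def using lower_env_le_upper_env[OF fin cons Ob L U _ that]
      Lb_le[OF P\<^sub>0] Ub_ge[OF P\<^sub>0] le_trans by blast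
  have "f x < g x"
    using gap lo_eq_lower_env[OF fin] up_eq_upper_env[OF fin] unfolding f_def g_def by simp
  then obtain F where F: "preceq_mono I R m v F"
    and between: "\<And>a. a \<in> Omega I m v \<Longrightarrow> f a \<le> F a \<and> F a \<le> g a"
    and observable: "\<And>u. (u, v, Obs) \<in> R \<Longrightarrow> depends_on I m v F u"
    using ex_preceq_mono_between[OF finite_reg[OF I] f g fg, where x\<^sub>0 = x] gap(1)
      pR_Obs_regulator[OF wf P\<^sub>0] by blast
  have "?L a \<le> F a \<and> F a \<le> ?U a" if "a \<in> Omega I m v" for a
    using between[OF that] lower_env_ge(1)[OF fin, where L = ?L] upper_env_le(1)[OF fin, where U = ?U]
    unfolding f_def g_def by (meson le_trans)
  then obtain P where P: "P \<in> pR n I m R T" "\<And>a. a \<in> Omega I m v \<Longrightarrow> P v a = F a"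
    using ex_pR_with_component[OF wf nonempty v F _ observable] by blast
  have "P v a = k" if "(a, k) \<in> Ob" for a k
  proof -
    have a: "a \<in> Omega I m v" using Ob that by force
    have "f a = k" "g a = k"
      unfolding f_def g_def using lower_env_obs[OF fin cons that] upper_env_obs[OF fin cons that] .
    with between[OF a] P(2)[OF a] show ?thesis by simp
  qed
  with P(1) show thesis by (rule that)
qed

theorem theorem3:
  fixes n :: nat and I :: "(nat \<times> nat) set" and m :: "nat \<Rightarrow> nat"
    and R :: "(nat \<times> nat \<times> sgn) set" and T :: "trans set"
  assumes "I \<subseteq> Vset n \<times> Vset n"
    and "well_formed I R"
    and "T \<subseteq> Delta n m"
    and "pR n I m R T \<noteq> {}"
  shows "\<forall>v \<in> Vset n. \<forall>\<omega> \<in> Omega I m v. \<forall>\<omega>' \<in> Omega I m v. \<omega> \<noteq> \<omega>' \<longrightarrow>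
    (\<forall>y \<in> {Lb n I m R T v \<omega> .. Ub n I m R T v \<omega>}.
     \<forall>z \<in> {lo n I m R T v \<omega>' {(\<omega>, y)} .. up n I m R T v \<omega>' {(\<omega>, y)}}.
       (\<exists>\<omega>'' \<in> Omega I m v - {\<omega>, \<omega>'}.
           lo n I m R T v \<omega>'' {(\<omega>, y), (\<omega>', z)} < up n I m R T v \<omega>'' {(\<omega>, y), (\<omega>', z)})
       \<longrightarrow> (\<exists>P \<in> pR n I m R T. P v \<omega> = y \<and> P v \<omega>' = z))"
proof (intro ballI impI)
  fix v \<omega> \<omega>' y z
  assume v: "v \<in> Vset n" and \<omega>: "\<omega> \<in> Omega I m v" and \<omega>': "\<omega>' \<in> Omega I m v" and ne: "\<omega> \<noteq> \<omega>'"
    and y: "y \<in> {Lb n I m R T v \<omega> .. Ub n I m R T v \<omega>}"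
    and z: "z \<in> {lo n I m R T v \<omega>' {(\<omega>, y)} .. up n I m R T v \<omega>' {(\<omega>, y)}}"
    and gap: "\<exists>\<omega>'' \<in> Omega I m v - {\<omega>, \<omega>'}.
           lo n I m R T v \<omega>'' {(\<omega>, y), (\<omega>', z)} < up n I m R T v \<omega>'' {(\<omega>, y), (\<omega>', z)}"
  have z_bounds: "Lb n I m R T v \<omega>' \<le> z" "z \<le> Ub n I m R T v \<omega>'"
    and z_order: "prec I R v \<omega> \<omega>' \<Longrightarrow> y \<le> z" "prec I R v \<omega>' \<omega> \<Longrightarrow> z \<le> y"
    using z lo_le_iff[of "{(\<omega>, y)}"] le_up_iff[of "{(\<omega>, y)}"] by auto
  have "consistent_obs I R v (Lb n I m R T v) (Ub n I m R T v) {(\<omega>, y), (\<omega>', z)}"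
    using y z_bounds z_order ne unfolding consistent_obs_def prec_def by auto
  with assms(1,2,4) v obtain P where "P \<in> pR n I m R T" "\<And>a k. (a, k) \<in> {(\<omega>, y), (\<omega>', z)} \<Longrightarrow> P v a = k"
    using gap \<omega> \<omega>' by (elim ex_pR_realising_obs bexE) auto
  then show "\<exists>P \<in> pR n I m R T. P v \<omega> = y \<and> P v \<omega>' = z" by blast
qed

end
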